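(* Let $S$ be a Hausdorff countably compact topological semigroup which is algebraically a primitive inverse semigroup. Then the inversion $x\mapsto x^{-1}$ on $S$ is continuous if and only if every maximal subgroup of $S$ (with the subspace topology) is a topological group.
   Context: A topological semigroup is a Hausdorff space with jointly continuous associative operation. A semigroup is inverse if every $x$ has a unique $y=x^{-1}$ with $xyx=x$, $yxy=y$; it is primitive inverse if it is non-trivial, inverse, has a zero and all non-zero idempotents are minimal among non-zero idempotents in the natural order. A maximal subgroup is a maximal subgroup of $S$ containing a given idempotent. *)

theory Defs
  imports "HOL-Analysis.Analysis"
begin

text \<open>A topological semigroup: a (Hausdorff) space with a jointly continuous
associative operation. The carrier is the whole type; Hausdorffness is
imposed via the class t2_space in the statement.\<close>
definition topological_semigroup :: "('a::topological_space \<Rightarrow> 'a \<Rightarrow> 'a) \<Rightarrow> bool" where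
  "topological_semigroup m \<longleftrightarrow>
     (\<forall>x y z. m (m x y) z = m x (m y z)) \<and>
     continuous_on UNIV (\<lambda>p. m (fst p) (snd p))"

definition inverse_semigroup :: "('a \<Rightarrow> 'a \<Rightarrow> 'a) \<Rightarrow> bool" where
  "inverse_semigroup m \<longleftrightarrow>
     (\<forall>x y z. m (m x y) z = m x (m y z)) \<and>
     (\<forall>x. \<exists>!y. m (m x y) x = x \<and> m (m y x) y = y)"

definition sg_inv :: "('a \<Rightarrow> 'a \<Rightarrow> 'a) \<Rightarrow> 'a \<Rightarrow> 'a" where
  "sg_inv m x = (THE y. m (m x y) x = x \<and> m (m y x) y = y)"

definition is_zero :: "('a \<Rightarrow> 'a \<Rightarrow> 'a) \<Rightarrow> 'a \<Rightarrow> bool" where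
  "is_zero m z \<longleftrightarrow> (\<forall>x. m z x = z \<and> m x z = z)"

definition idempotent :: "('a \<Rightarrow> 'a \<Rightarrow> 'a) \<Rightarrow> 'a \<Rightarrow> bool" where
  "idempotent m e \<longleftrightarrow> m e e = e"

definition idem_le :: "('a \<Rightarrow> 'a \<Rightarrow> 'a) \<Rightarrow> 'a \<Rightarrow> 'a \<Rightarrow> bool" where
  "idem_le m e f \<longleftrightarrow> e = m e f \<and> e = m f e"

definition primitive_inverse_semigroup :: "('a \<Rightarrow> 'a \<Rightarrow> 'a) \<Rightarrow> bool" where
  "primitive_inverse_semigroup m \<longleftrightarrow>
     inverse_semigroup m \<and>
     (\<exists>z. is_zero m z \<and> (\<exists>x. x \<noteq> z) \<and>
        (\<forall>e f. idempotent m e \<and> idempotent m f \<and> e \<noteq> z \<and> f \<noteq> z \<and> idem_le m e f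
               \<longrightarrow> e = f))"

definition subgroup_at :: "('a \<Rightarrow> 'a \<Rightarrow> 'a) \<Rightarrow> 'a set \<Rightarrow> 'a \<Rightarrow> bool" where
  "subgroup_at m G e \<longleftrightarrow>
     e \<in> G \<and> (\<forall>x\<in>G. \<forall>y\<in>G. m x y \<in> G) \<and>
     (\<forall>x\<in>G. m e x = x \<and> m x e = x) \<and>
     (\<forall>x\<in>G. \<exists>y\<in>G. m x y = e \<and> m y x = e)"

definition is_subgroup :: "('a \<Rightarrow> 'a \<Rightarrow> 'a) \<Rightarrow> 'a set \<Rightarrow> bool" where
  "is_subgroup m G \<longleftrightarrow> (\<exists>e. subgroup_at m G e)"

definition maximal_subgroup :: "('a \<Rightarrow> 'a \<Rightarrow> 'a) \<Rightarrow> 'a set \<Rightarrow> bool" where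
  "maximal_subgroup m G \<longleftrightarrow>
     is_subgroup m G \<and> (\<forall>G'. is_subgroup m G' \<and> G \<subseteq> G' \<longrightarrow> G' = G)"

definition topological_subgroup :: "('a::topological_space \<Rightarrow> 'a \<Rightarrow> 'a) \<Rightarrow> 'a set \<Rightarrow> bool" where
  "topological_subgroup m G \<longleftrightarrow>
     (\<exists>e. subgroup_at m G e \<and>
        continuous_on (G \<times> G) (\<lambda>p. m (fst p) (snd p)) \<and>
        continuous_on G (\<lambda>x. THE y. y \<in> G \<and> m x y = e \<and> m y x = e))"

end

theory Submission
  imports Defs
begin

text \<open>
  In a primitive inverse semigroup distinct non-zero idempotents are orthogonal, so for \<open>a \<noteq> 0\<close>
  the \<open>H\<close>-class of \<open>a\<close> is \<open>{y. a a\<^sup>-\<^sup>1 y \<noteq> 0 \<and> y a\<^sup>-\<^sup>1 a \<noteq> 0}\<close>, an open set, and left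
  translation by \<open>a\<^sup>-\<^sup>1\<close> carries it into the maximal subgroup at \<open>a\<^sup>-\<^sup>1 a\<close>. Continuity of
  inversion on the maximal subgroups therefore gives continuity at every non-zero point.
  At \<open>0\<close>, let \<open>C\<close> be closed with \<open>0 \<notin> C\<close>. Countable compactness makes the locally constant
  map \<open>k \<mapsto> k\<^sup>-\<^sup>1 k\<close> take finitely many values on \<open>C\<close>, which can be separated from \<open>0\<close> by an
  open set \<open>A\<close>, and it provides a finite \<open>F\<close> such that every \<open>k \<in> C\<close> has \<open>k\<^sup>-\<^sup>1 t \<in> A\<close> for
  some \<open>t \<in> F\<close>. As \<open>y t \<rightarrow> 0\<close> for \<open>y \<rightarrow> 0\<close>, the inverses of points near \<open>0\<close> avoid \<open>C\<close>.
\<close>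

locale inv_semigroup =
  fixes mult :: "'a \<Rightarrow> 'a \<Rightarrow> 'a"  (infixl \<open>\<cdot>\<close> 70)
  assumes inverse_semigroup: "inverse_semigroup (\<cdot>)"
begin

abbreviation sinv :: "'a \<Rightarrow> 'a"  (\<open>_\<^sup>-\<^sup>1\<close> [1000] 999)
  where "x\<^sup>-\<^sup>1 \<equiv> sg_inv (\<cdot>) x"

lemma assoc [simp]: "x \<cdot> y \<cdot> w = x \<cdot> (y \<cdot> w)"
  using inverse_semigroup unfolding inverse_semigroup_def by blast

lemma ex1_sinv: "\<exists>!y. x \<cdot> y \<cdot> x = x \<and> y \<cdot> x \<cdot> y = y"
  using inverse_semigroup unfolding inverse_semigroup_def by blast

lemma sinv_unique: "x \<cdot> y \<cdot> x = x \<Longrightarrow> y \<cdot> x \<cdot> y = y \<Longrightarrow> x\<^sup>-\<^sup>1 = y"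
  unfolding sg_inv_def by (rule the1_equality[OF ex1_sinv]) simp

lemma mult_sinv_mult [simp]: "x \<cdot> (x\<^sup>-\<^sup>1 \<cdot> x) = x"
  and sinv_mult_sinv [simp]: "x\<^sup>-\<^sup>1 \<cdot> (x \<cdot> x\<^sup>-\<^sup>1) = x\<^sup>-\<^sup>1"
  using theI'[OF ex1_sinv, of x] unfolding sg_inv_def by simp_all

lemma mult_sinv_mult' [simp]: "x \<cdot> (x\<^sup>-\<^sup>1 \<cdot> (x \<cdot> y)) = x \<cdot> y"
  and sinv_mult_sinv' [simp]: "x\<^sup>-\<^sup>1 \<cdot> (x \<cdot> (x\<^sup>-\<^sup>1 \<cdot> y)) = x\<^sup>-\<^sup>1 \<cdot> y"
  by (metis assoc mult_sinv_mult, metis assoc sinv_mult_sinv)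

lemma sinv_sinv [simp]: "(x\<^sup>-\<^sup>1)\<^sup>-\<^sup>1 = x"
  by (rule sinv_unique) simp_all

lemma sinv_idem: "e \<cdot> e = e \<Longrightarrow> e\<^sup>-\<^sup>1 = e"
  by (rule sinv_unique) simp_all

text \<open>\<open>x = (e \<cdot> f)\<^sup>-\<^sup>1\<close> satisfies \<open>x = f \<cdot> x \<cdot> e\<close>, which makes \<open>x\<close> idempotent;
  hence so is its inverse \<open>e \<cdot> f\<close>.\<close>
lemma idem_mult:
  assumes e: "e \<cdot> e = e" and f: "f \<cdot> f = f"
  shows "e \<cdot> f \<cdot> (e \<cdot> f) = e \<cdot> f"
proof -
  have e': "e \<cdot> (e \<cdot> y) = e \<cdot> y" and f': "f \<cdot> (f \<cdot> y) = f \<cdot> y" for y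
    using e f by (metis assoc)+
  define x where "x = (e \<cdot> f)\<^sup>-\<^sup>1"
  have ef_x: "e \<cdot> f \<cdot> x \<cdot> (e \<cdot> f) = e \<cdot> f" and x_ef: "x \<cdot> (e \<cdot> f) \<cdot> x = x"
    unfolding x_def by (metis assoc mult_sinv_mult, metis assoc sinv_mult_sinv)
  have x_eq: "x = f \<cdot> x \<cdot> e"
  proof (subst (1) x_def, rule sinv_unique)
    show "e \<cdot> f \<cdot> (f \<cdot> x \<cdot> e) \<cdot> (e \<cdot> f) = e \<cdot> f" using ef_x by (simp add: e' f' x_def)
    have "f \<cdot> x \<cdot> e \<cdot> (e \<cdot> f) \<cdot> (f \<cdot> x \<cdot> e) = f \<cdot> (x \<cdot> (e \<cdot> f) \<cdot> x) \<cdot> e" by (simp add: e' f')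
    then show "f \<cdot> x \<cdot> e \<cdot> (e \<cdot> f) \<cdot> (f \<cdot> x \<cdot> e) = f \<cdot> x \<cdot> e" by (simp only: x_ef)
  qed
  then have "x \<cdot> x = f \<cdot> (x \<cdot> (e \<cdot> f) \<cdot> x) \<cdot> e" by (metis assoc)
  also have "\<dots> = x" using x_ef x_eq by simp
  finally have "x \<cdot> x = x" .
  moreover have "e \<cdot> f = x" using sinv_idem[OF \<open>x \<cdot> x = x\<close>] by (simp add: x_def)
  ultimately show ?thesis by simp
qed

lemma idem_commute:
  assumes e: "e \<cdot> e = e" and f: "f \<cdot> f = f"
  shows "e \<cdot> f = f \<cdot> e"
proof -
  have "(e \<cdot> f)\<^sup>-\<^sup>1 = f \<cdot> e"
  proof (rule sinv_unique)
    have "e \<cdot> f \<cdot> (f \<cdot> e) \<cdot> (e \<cdot> f) = e \<cdot> (f \<cdot> f) \<cdot> (e \<cdot> e) \<cdot> f" by simp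
    then show "e \<cdot> f \<cdot> (f \<cdot> e) \<cdot> (e \<cdot> f) = e \<cdot> f" using e f idem_mult[OF e f] by simp
    have "f \<cdot> e \<cdot> (e \<cdot> f) \<cdot> (f \<cdot> e) = f \<cdot> (e \<cdot> e) \<cdot> (f \<cdot> f) \<cdot> e" by simp
    then show "f \<cdot> e \<cdot> (e \<cdot> f) \<cdot> (f \<cdot> e) = f \<cdot> e" using e f idem_mult[OF f e] by simp
  qed
  then show ?thesis using sinv_idem[OF idem_mult[OF e f]] by simp
qed

definition lproj :: "'a \<Rightarrow> 'a" where "lproj x = x \<cdot> x\<^sup>-\<^sup>1"
definition rproj :: "'a \<Rightarrow> 'a" where "rproj x = x\<^sup>-\<^sup>1 \<cdot> x"

lemma lproj_idem: "lproj x \<cdot> lproj x = lproj x"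
  and rproj_idem: "rproj x \<cdot> rproj x = rproj x"
  unfolding lproj_def rproj_def by (metis assoc mult_sinv_mult)+

lemma lproj_mult [simp]: "lproj x \<cdot> x = x"
  and mult_rproj [simp]: "x \<cdot> rproj x = x"
  unfolding lproj_def rproj_def by simp_all

lemma lproj_sinv [simp]: "lproj (x\<^sup>-\<^sup>1) = rproj x"
  and rproj_sinv [simp]: "rproj (x\<^sup>-\<^sup>1) = lproj x"
  unfolding lproj_def rproj_def by simp_all

lemma lproj_idem_eq: "e \<cdot> e = e \<Longrightarrow> lproj e = e"
  and rproj_idem_eq: "e \<cdot> e = e \<Longrightarrow> rproj e = e"
  unfolding lproj_def rproj_def by (simp_all add: sinv_idem)

lemma sinv_mult: "(x \<cdot> y)\<^sup>-\<^sup>1 = y\<^sup>-\<^sup>1 \<cdot> x\<^sup>-\<^sup>1"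
proof (rule sinv_unique)
  have comm: "y \<cdot> y\<^sup>-\<^sup>1 \<cdot> (x\<^sup>-\<^sup>1 \<cdot> x) = x\<^sup>-\<^sup>1 \<cdot> x \<cdot> (y \<cdot> y\<^sup>-\<^sup>1)"
    using idem_commute[OF lproj_idem rproj_idem] unfolding lproj_def rproj_def .
  have "x \<cdot> y \<cdot> (y\<^sup>-\<^sup>1 \<cdot> x\<^sup>-\<^sup>1) \<cdot> (x \<cdot> y) = x \<cdot> (y \<cdot> y\<^sup>-\<^sup>1 \<cdot> (x\<^sup>-\<^sup>1 \<cdot> x)) \<cdot> y" by simp
  then show "x \<cdot> y \<cdot> (y\<^sup>-\<^sup>1 \<cdot> x\<^sup>-\<^sup>1) \<cdot> (x \<cdot> y) = x \<cdot> y" by (simp only: comm) simp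
  have "y\<^sup>-\<^sup>1 \<cdot> x\<^sup>-\<^sup>1 \<cdot> (x \<cdot> y) \<cdot> (y\<^sup>-\<^sup>1 \<cdot> x\<^sup>-\<^sup>1) = y\<^sup>-\<^sup>1 \<cdot> (x\<^sup>-\<^sup>1 \<cdot> x \<cdot> (y \<cdot> y\<^sup>-\<^sup>1)) \<cdot> x\<^sup>-\<^sup>1" by simp
  then show "y\<^sup>-\<^sup>1 \<cdot> x\<^sup>-\<^sup>1 \<cdot> (x \<cdot> y) \<cdot> (y\<^sup>-\<^sup>1 \<cdot> x\<^sup>-\<^sup>1) = y\<^sup>-\<^sup>1 \<cdot> x\<^sup>-\<^sup>1" by (simp only: comm[symmetric]) simp
qed

lemma lproj_mult_eq: "rproj x = lproj y \<Longrightarrow> lproj (x \<cdot> y) = lproj x"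
  and rproj_mult_eq: "rproj x = lproj y \<Longrightarrow> rproj (x \<cdot> y) = rproj y"
proof -
  assume xy: "rproj x = lproj y"
  have "lproj (x \<cdot> y) = x \<cdot> lproj y \<cdot> x\<^sup>-\<^sup>1" by (simp add: lproj_def sinv_mult)
  also have "\<dots> = x \<cdot> rproj x \<cdot> x\<^sup>-\<^sup>1" by (simp add: xy)
  also have "\<dots> = lproj x" by (simp add: lproj_def rproj_def)
  finally show "lproj (x \<cdot> y) = lproj x" .
  have "rproj (x \<cdot> y) = y\<^sup>-\<^sup>1 \<cdot> rproj x \<cdot> y" by (simp add: rproj_def sinv_mult)
  also have "\<dots> = y\<^sup>-\<^sup>1 \<cdot> lproj y \<cdot> y" by (simp add: xy)
  also have "\<dots> = rproj y" by (simp add: lproj_def rproj_def)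
  finally show "rproj (x \<cdot> y) = rproj y" .
qed

definition H_class :: "'a \<Rightarrow> 'a set"
  where "H_class a = {y. lproj y = lproj a \<and> rproj y = rproj a}"

lemma H_class_idem: "e \<cdot> e = e \<Longrightarrow> H_class e = {y. lproj y = e \<and> rproj y = e}"
  by (simp add: H_class_def lproj_idem_eq rproj_idem_eq)

lemma subgroup_at_H_class:
  assumes e: "e \<cdot> e = e"
  shows "subgroup_at (\<cdot>) (H_class e) e"
  unfolding subgroup_at_def H_class_idem[OF e]
proof (intro conjI ballI)
  show "e \<in> {y. lproj y = e \<and> rproj y = e}" by (simp add: e lproj_idem_eq rproj_idem_eq)
next
  fix x y assume "x \<in> {y. lproj y = e \<and> rproj y = e}" "y \<in> {y. lproj y = e \<and> rproj y = e}"
  then show "x \<cdot> y \<in> {y. lproj y = e \<and> rproj y = e}" by (simp add: lproj_mult_eq rproj_mult_eq)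
next
  fix x assume "x \<in> {y. lproj y = e \<and> rproj y = e}"
  then have l: "lproj x = e" and r: "rproj x = e" by simp_all
  show "e \<cdot> x = x" using lproj_mult[of x] l by simp
  show "x \<cdot> e = x" using mult_rproj[of x] r by simp
  show "\<exists>y\<in>{y. lproj y = e \<and> rproj y = e}. x \<cdot> y = e \<and> y \<cdot> x = e"
    using l r by (intro bexI[of _ "x\<^sup>-\<^sup>1"]) (auto simp: lproj_def rproj_def)
qed

lemma subgroup_at_inverse:
  assumes G: "subgroup_at (\<cdot>) G e" and x: "x \<in> G" and y: "y \<in> G" "x \<cdot> y = e" "y \<cdot> x = e"
  shows "x\<^sup>-\<^sup>1 = y"
proof (rule sinv_unique)
  show "x \<cdot> y \<cdot> x = x" using G x y unfolding subgroup_at_def by simp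
  show "y \<cdot> x \<cdot> y = y" using G y unfolding subgroup_at_def by simp
qed

lemma subgroup_at_THE_inverse:
  assumes G: "subgroup_at (\<cdot>) G e" and x: "x \<in> G"
  shows "(THE y. y \<in> G \<and> x \<cdot> y = e \<and> y \<cdot> x = e) = x\<^sup>-\<^sup>1"
proof -
  obtain y where "y \<in> G" "x \<cdot> y = e" "y \<cdot> x = e" using G x unfolding subgroup_at_def by blast
  then show ?thesis using subgroup_at_inverse[OF G x] by (intro the_equality) auto
qed

lemma subgroup_at_lproj_rproj:
  assumes G: "subgroup_at (\<cdot>) G e" and x: "x \<in> G"
  shows "lproj x = e \<and> rproj x = e"
proof -
  obtain y where "y \<in> G" "x \<cdot> y = e" "y \<cdot> x = e" using G x unfolding subgroup_at_def by blast
  with subgroup_at_inverse[OF G x] show ?thesis by (simp add: lproj_def rproj_def)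
qed

lemma maximal_subgroup_H_class:
  assumes e: "e \<cdot> e = e"
  shows "maximal_subgroup (\<cdot>) (H_class e)"
  unfolding maximal_subgroup_def is_subgroup_def
proof (intro conjI allI impI)
  show "\<exists>e'. subgroup_at (\<cdot>) (H_class e) e'" using subgroup_at_H_class[OF e] by blast
  fix G assume "(\<exists>e'. subgroup_at (\<cdot>) G e') \<and> H_class e \<subseteq> G"
  then obtain e' where G: "subgroup_at (\<cdot>) G e'" and sub: "H_class e \<subseteq> G" by blast
  have "e \<in> H_class e" using subgroup_at_H_class[OF e] by (simp add: subgroup_at_def)
  then have "e' = e" using sub subgroup_at_lproj_rproj[OF G] lproj_idem_eq[OF e] by blast
  then have "G \<subseteq> H_class e" using subgroup_at_lproj_rproj[OF G] by (auto simp: H_class_idem[OF e])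
  with sub show "G = H_class e" by blast
qed

end

locale primitive_inv_semigroup = inv_semigroup +
  fixes z :: 'a
  assumes zero: "is_zero (\<cdot>) z"
    and primitive: "\<And>e f. idempotent (\<cdot>) e \<Longrightarrow> idempotent (\<cdot>) f \<Longrightarrow> e \<noteq> z \<Longrightarrow> f \<noteq> z \<Longrightarrow>
                    idem_le (\<cdot>) e f \<Longrightarrow> e = f"
begin

lemma zero_mult [simp]: "z \<cdot> x = z" and mult_zero [simp]: "x \<cdot> z = z"
  using zero unfolding is_zero_def by auto

lemma sinv_zero [simp]: "z\<^sup>-\<^sup>1 = z"
  by (rule sinv_unique) simp_all

lemma idem_orthogonal:
  assumes e: "e \<cdot> e = e" and f: "f \<cdot> f = f" and "e \<noteq> z" "f \<noteq> z" "e \<noteq> f"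
  shows "e \<cdot> f = z"
proof (rule ccontr)
  assume ef: "e \<cdot> f \<noteq> z"
  have idem: "idempotent (\<cdot>) (e \<cdot> f)" "idempotent (\<cdot>) e" "idempotent (\<cdot>) f"
    using idem_mult[OF e f] e f by (simp_all add: idempotent_def)
  have "idem_le (\<cdot>) (e \<cdot> f) e" and "idem_le (\<cdot>) (e \<cdot> f) f"
    using idem_commute[OF e f] e f unfolding idem_le_def by (metis assoc)+
  then have "e \<cdot> f = e" and "e \<cdot> f = f" using primitive idem ef \<open>e \<noteq> z\<close> \<open>f \<noteq> z\<close> by blast+
  with \<open>e \<noteq> f\<close> show False by simp
qed

lemma lproj_eq_if_nonzero:
  assumes "lproj a \<cdot> y \<noteq> z"
  shows "lproj y = lproj a"
proof (rule ccontr)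
  assume "lproj y \<noteq> lproj a"
  moreover have "lproj y \<noteq> z" "lproj a \<noteq> z"
    using assms lproj_mult[of y] by (metis mult_zero zero_mult)+
  ultimately have "lproj a \<cdot> lproj y = z" by (intro idem_orthogonal lproj_idem) auto
  then have "lproj a \<cdot> y = z" using lproj_mult[of y] by (metis assoc zero_mult)
  with assms show False ..
qed

lemma rproj_eq_if_nonzero:
  assumes "y \<cdot> rproj a \<noteq> z"
  shows "rproj y = rproj a"
proof (rule ccontr)
  assume "rproj y \<noteq> rproj a"
  moreover have "rproj y \<noteq> z" "rproj a \<noteq> z"
    using assms mult_rproj[of y] by (metis mult_zero zero_mult)+
  ultimately have "rproj y \<cdot> rproj a = z" by (intro idem_orthogonal rproj_idem) auto
  then have "y \<cdot> rproj a = z" using mult_rproj[of y] by (metis assoc mult_zero)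
  with assms show False ..
qed

lemma H_class_eq_nonzero:
  assumes "a \<noteq> z"
  shows "H_class a = {y. lproj a \<cdot> y \<noteq> z \<and> y \<cdot> rproj a \<noteq> z}"
proof (intro set_eqI iffI)
  fix y assume y: "y \<in> H_class a"
  then have "lproj a \<cdot> y = y" "y \<cdot> rproj a = y"
    using lproj_mult[of y] mult_rproj[of y] by (simp_all add: H_class_def)
  moreover have "y \<noteq> z"
  proof
    assume "y = z"
    then have "lproj a = z" using y by (simp add: H_class_def lproj_def)
    then show False using assms lproj_mult[of a] by simp
  qed
  ultimately show "y \<in> {y. lproj a \<cdot> y \<noteq> z \<and> y \<cdot> rproj a \<noteq> z}" by simp
qed (simp add: H_class_def lproj_eq_if_nonzero rproj_eq_if_nonzero)

lemma H_class_translate: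
  assumes "y \<in> H_class a"
  shows "a\<^sup>-\<^sup>1 \<cdot> y \<in> H_class (rproj a)" and "y\<^sup>-\<^sup>1 = (a\<^sup>-\<^sup>1 \<cdot> y)\<^sup>-\<^sup>1 \<cdot> a\<^sup>-\<^sup>1"
proof -
  from assms have l: "lproj y = lproj a" and r: "rproj y = rproj a" by (simp_all add: H_class_def)
  then have "rproj (a\<^sup>-\<^sup>1) = lproj y" by simp
  then have "lproj (a\<^sup>-\<^sup>1 \<cdot> y) = rproj a" and "rproj (a\<^sup>-\<^sup>1 \<cdot> y) = rproj a"
    using r by (simp_all add: lproj_mult_eq rproj_mult_eq)
  then show "a\<^sup>-\<^sup>1 \<cdot> y \<in> H_class (rproj a)" by (simp add: H_class_idem rproj_idem)
  have "(a\<^sup>-\<^sup>1 \<cdot> y)\<^sup>-\<^sup>1 \<cdot> a\<^sup>-\<^sup>1 = y\<^sup>-\<^sup>1 \<cdot> lproj a" by (simp add: sinv_mult lproj_def)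
  also have "\<dots> = y\<^sup>-\<^sup>1 \<cdot> lproj y" by (simp only: l)
  also have "\<dots> = y\<^sup>-\<^sup>1" by (simp add: lproj_def)
  finally show "y\<^sup>-\<^sup>1 = (a\<^sup>-\<^sup>1 \<cdot> y)\<^sup>-\<^sup>1 \<cdot> a\<^sup>-\<^sup>1" ..
qed

end

lemma countably_compact_locally_subsingleton_finite:
  fixes C T :: "'a::topological_space set"
  assumes cc: "countably_compact (UNIV :: 'a set)" and "closed C" "T \<subseteq> C"
    and loc: "\<And>p. p \<in> C \<Longrightarrow> \<exists>W. open W \<and> p \<in> W \<and> (\<forall>x\<in>W \<inter> T. \<forall>y\<in>W \<inter> T. x = y)"
  shows "finite T"
proof (rule ccontr)
  assume "infinite T"
  then obtain S where S: "S \<subseteq> T" "countable S" "infinite S" using infinite_countable_subset' by blast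
  obtain p where acc: "\<forall>U. p \<in> U \<and> open U \<longrightarrow> infinite (U \<inter> S)"
    using countably_compact_imp_acc_point[OF cc S(2,3) subset_UNIV] by blast
  have "p \<in> C"
  proof (rule ccontr)
    assume "p \<notin> C"
    then have "infinite (- C \<inter> S)" using acc \<open>closed C\<close> by (simp add: open_Compl)
    moreover have "- C \<inter> S = {}" using S(1) \<open>T \<subseteq> C\<close> by blast
    ultimately show False by simp
  qed
  then obtain W where W: "open W" "p \<in> W" and sub: "\<forall>x\<in>W \<inter> T. \<forall>y\<in>W \<inter> T. x = y" using loc by blast
  have "finite (W \<inter> S)"
  proof (cases "W \<inter> S = {}")
    case False
    then obtain a where "a \<in> W \<inter> S" by blast
    then have "W \<inter> S \<subseteq> {a}" using sub S(1) by blast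
    then show ?thesis using finite_subset by blast
  qed simp
  with acc W show False by blast
qed

lemma countably_compact_locally_constant_finite_image:
  fixes C :: "'a::topological_space set"
  assumes cc: "countably_compact (UNIV :: 'a set)" and C: "closed C"
    and loc: "\<And>p. p \<in> C \<Longrightarrow> \<exists>W. open W \<and> p \<in> W \<and> (\<forall>x\<in>W \<inter> C. g x = g p)"
  shows "finite (g ` C)"
proof -
  have "finite (inv_into C g ` g ` C)"
  proof (rule countably_compact_locally_subsingleton_finite[OF cc C])
    show "inv_into C g ` g ` C \<subseteq> C" by (auto intro: inv_into_into)
    fix p assume "p \<in> C"
    then obtain W where W: "open W" "p \<in> W" "\<forall>x\<in>W \<inter> C. g x = g p" using loc by blast
    have "x = y" if "x \<in> W \<inter> inv_into C g ` g ` C" "y \<in> W \<inter> inv_into C g ` g ` C" for x y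
    proof -
      from that obtain a b where ab: "a \<in> C" "b \<in> C" "x = inv_into C g (g a)" "y = inv_into C g (g b)"
        by blast
      then have "x \<in> C" "y \<in> C" "g x = g a" "g y = g b" by (auto intro: inv_into_into f_inv_into_f)
      then have "g a = g b" using W(3) that by auto
      then show ?thesis using ab by simp
    qed
    with W(1,2) show "\<exists>W. open W \<and> p \<in> W \<and> (\<forall>x\<in>W \<inter> inv_into C g ` g ` C. \<forall>y\<in>W \<inter> inv_into C g ` g ` C. x = y)"
      by blast
  qed
  then show ?thesis using finite_imageD inj_on_inv_into by blast
qed

text \<open>A maximal subset of \<open>C\<close> whose distinct points are never mutually related is finite by
  local relatedness, and by maximality every point of \<open>C\<close> is related to one of its points.\<close>
lemma countably_compact_finite_cover:
  fixes C :: "'a::topological_space set"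
  assumes cc: "countably_compact (UNIV :: 'a set)" and C: "closed C"
    and refl: "\<And>k. k \<in> C \<Longrightarrow> R k k"
    and loc: "\<And>p. p \<in> C \<Longrightarrow> \<exists>W. open W \<and> p \<in> W \<and> (\<forall>x\<in>W \<inter> C. \<forall>y\<in>W \<inter> C. R x y)"
  obtains F where "finite F" "F \<subseteq> C" "\<And>k. k \<in> C \<Longrightarrow> \<exists>t\<in>F. R k t"
proof -
  define Sep where "Sep = {T. T \<subseteq> C \<and> pairwise (\<lambda>x y. \<not> (R x y \<and> R y x)) T}"
  have "\<Union>Ch \<in> Sep" if "Ch \<in> chains Sep" for Ch
    using that pairwise_chain_Union[of Ch] by (fastforce simp: Sep_def chains_def)
  then obtain M where M: "M \<subseteq> C" "pairwise (\<lambda>x y. \<not> (R x y \<and> R y x)) M"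
    and max: "\<And>X. X \<in> Sep \<Longrightarrow> M \<subseteq> X \<Longrightarrow> X = M"
    using Zorn_Lemma[of Sep] by (auto simp: Sep_def)
  have "finite M"
  proof (rule countably_compact_locally_subsingleton_finite[OF cc C M(1)])
    fix p assume "p \<in> C"
    then obtain W where W: "open W" "p \<in> W" "\<forall>x\<in>W \<inter> C. \<forall>y\<in>W \<inter> C. R x y" using loc by blast
    have "x = y" if "x \<in> W \<inter> M" "y \<in> W \<inter> M" for x y
      using that W(3) M unfolding pairwise_def by blast
    with W(1,2) show "\<exists>W. open W \<and> p \<in> W \<and> (\<forall>x\<in>W \<inter> M. \<forall>y\<in>W \<inter> M. x = y)" by blast
  qed
  moreover have "\<exists>t\<in>M. R k t" if k: "k \<in> C" for k
  proof (cases "k \<in> M")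
    case False
    then have "insert k M \<notin> Sep" using max[of "insert k M"] by blast
    then show ?thesis using k M by (auto simp: Sep_def pairwise_insert)
  qed (use refl k in blast)
  ultimately show ?thesis using that M(1) by blast
qed

lemma t2_separate_finite_point:
  fixes D :: "'a::t2_space set"
  assumes "finite D" "z \<notin> D"
  obtains A B where "open A" "open B" "D \<subseteq> A" "z \<in> B" "A \<inter> B = {}"
proof -
  have "Hausdorff_space (euclidean :: 'a topology)"
    by (auto simp: Hausdorff_space_def disjnt_def separation_t2)
  then show ?thesis using Hausdorff_space_compact_separation[of euclidean D "{z}"] assms that
    by (auto simp: finite_imp_compact disjnt_def)
qed

locale top_primitive_inv_semigroup = primitive_inv_semigroup mult z
  for mult :: "'a::t2_space \<Rightarrow> 'a \<Rightarrow> 'a"  (infixl \<open>\<cdot>\<close> 70) and z +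
  assumes topological_semigroup: "topological_semigroup (\<cdot>)"
begin

lemma continuous_on_mult_pair: "continuous_on S (\<lambda>p. fst p \<cdot> snd p)"
  using topological_semigroup continuous_on_subset unfolding topological_semigroup_def by blast

lemma continuous_on_mult:
  assumes "continuous_on S f" "continuous_on S g"
  shows "continuous_on S (\<lambda>x. f x \<cdot> g x)"
  using continuous_on_compose2[OF continuous_on_mult_pair[of UNIV] continuous_on_Pair[OF assms]] by simp

lemma mult_in_open_nbhds:
  assumes "open A" "u \<cdot> v \<in> A"
  obtains U V where "open U" "open V" "u \<in> U" "v \<in> V" "\<And>x y. x \<in> U \<Longrightarrow> y \<in> V \<Longrightarrow> x \<cdot> y \<in> A"
proof -
  have "open ((\<lambda>p. fst p \<cdot> snd p) -` A)" by (rule open_vimage[OF assms(1) continuous_on_mult_pair])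
  moreover have "(u, v) \<in> (\<lambda>p. fst p \<cdot> snd p) -` A" using assms(2) by simp
  ultimately obtain U V where UV: "open U" "open V" "(u, v) \<in> U \<times> V"
    and sub: "U \<times> V \<subseteq> (\<lambda>p. fst p \<cdot> snd p) -` A"
    by (rule open_prod_elim)
  have "x \<cdot> y \<in> A" if "x \<in> U" "y \<in> V" for x y using sub that by auto
  with UV that show ?thesis by blast
qed

lemma open_H_class:
  assumes "a \<noteq> z"
  shows "open (H_class a)"
proof -
  have "open {y. lproj a \<cdot> y \<noteq> z}" "open {y. y \<cdot> rproj a \<noteq> z}"
    by (rule open_Collect_neq, rule continuous_on_mult, (rule continuous_on_const continuous_on_id)+)+
  then show ?thesis unfolding H_class_eq_nonzero[OF assms] by (rule open_Collect_conj)
qed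

lemma topological_subgroup_iff_continuous_sinv:
  assumes "is_subgroup (\<cdot>) G"
  shows "topological_subgroup (\<cdot>) G \<longleftrightarrow> continuous_on G sinv"
proof -
  have THE_eq: "continuous_on G (\<lambda>x. THE y. y \<in> G \<and> x \<cdot> y = e \<and> y \<cdot> x = e) \<longleftrightarrow> continuous_on G sinv"
    if "subgroup_at (\<cdot>) G e" for e
    using subgroup_at_THE_inverse[OF that] by (intro continuous_on_cong) simp_all
  show ?thesis
  proof
    assume "topological_subgroup (\<cdot>) G"
    then obtain e where "subgroup_at (\<cdot>) G e"
      and "continuous_on G (\<lambda>x. THE y. y \<in> G \<and> x \<cdot> y = e \<and> y \<cdot> x = e)"
      unfolding topological_subgroup_def by blast
    with THE_eq show "continuous_on G sinv" by blast
  next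
    assume "continuous_on G sinv"
    moreover obtain e where "subgroup_at (\<cdot>) G e" using assms unfolding is_subgroup_def by blast
    ultimately show "topological_subgroup (\<cdot>) G"
      unfolding topological_subgroup_def using THE_eq continuous_on_mult_pair by blast
  qed
qed

context
  assumes groups: "\<And>e. e \<cdot> e = e \<Longrightarrow> continuous_on (H_class e) sinv"
begin

lemma continuous_on_sinv_H_class: "continuous_on (H_class a) sinv"
proof -
  have "continuous_on (H_class a) (\<lambda>y. a\<^sup>-\<^sup>1 \<cdot> y)"
    by (intro continuous_on_mult continuous_on_const continuous_on_id)
  then have "continuous_on (H_class a) (\<lambda>y. (a\<^sup>-\<^sup>1 \<cdot> y)\<^sup>-\<^sup>1)"
    by (rule continuous_on_compose2[OF groups[OF rproj_idem]]) (use H_class_translate(1) in blast)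
  then have "continuous_on (H_class a) (\<lambda>y. (a\<^sup>-\<^sup>1 \<cdot> y)\<^sup>-\<^sup>1 \<cdot> a\<^sup>-\<^sup>1)"
    by (intro continuous_on_mult continuous_on_const)
  then show ?thesis by (rule continuous_on_eq) (simp add: H_class_translate(2))
qed

lemma isCont_sinv_nonzero:
  assumes "a \<noteq> z"
  shows "isCont sinv a"
proof -
  have "a \<in> H_class a" by (simp add: H_class_def)
  with continuous_on_sinv_H_class[of a] show ?thesis
    using continuous_on_eq_continuous_at[OF open_H_class[OF assms]] by blast
qed

context
  assumes countably_compact: "countably_compact (UNIV :: 'a set)"
begin

lemma finite_rproj_image:
  assumes "closed C" "z \<notin> C"
  shows "finite (rproj ` C)"
proof (rule countably_compact_locally_constant_finite_image[OF countably_compact assms(1)])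
  fix p assume "p \<in> C"
  with assms(2) have "open (H_class p)" by (auto intro: open_H_class)
  then show "\<exists>W. open W \<and> p \<in> W \<and> (\<forall>x\<in>W \<inter> C. rproj x = rproj p)"
    by (intro exI[of _ "H_class p"]) (simp add: H_class_def)
qed

lemma finite_sinv_cover:
  assumes C: "closed C" "z \<notin> C" and A: "open A" "rproj ` C \<subseteq> A"
  obtains F where "finite F" "\<And>k. k \<in> C \<Longrightarrow> \<exists>t\<in>F. k\<^sup>-\<^sup>1 \<cdot> t \<in> A"
proof (rule countably_compact_finite_cover[OF countably_compact C(1), of "\<lambda>k t. k\<^sup>-\<^sup>1 \<cdot> t \<in> A"])
  show "k\<^sup>-\<^sup>1 \<cdot> k \<in> A" if "k \<in> C" for k
    using that A(2) by (auto simp: rproj_def)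
  fix p assume p: "p \<in> C"
  then have "p\<^sup>-\<^sup>1 \<cdot> p \<in> A" using A(2) by (auto simp: rproj_def)
  then obtain U V where UV: "open U" "open V" "p\<^sup>-\<^sup>1 \<in> U" "p \<in> V"
    and UV_A: "\<And>x y. x \<in> U \<Longrightarrow> y \<in> V \<Longrightarrow> x \<cdot> y \<in> A"
    using mult_in_open_nbhds[OF A(1)] by blast
  have "p \<noteq> z" using p C(2) by blast
  then have "open (sinv -` U \<inter> H_class p)"
    using continuous_on_sinv_H_class open_H_class UV(1) continuous_on_open_vimage by blast
  then have "open (V \<inter> (sinv -` U \<inter> H_class p))" using UV(2) by blast
  moreover have "p \<in> V \<inter> (sinv -` U \<inter> H_class p)" using UV by (simp add: H_class_def)
  ultimately show "\<exists>W. open W \<and> p \<in> W \<and> (\<forall>x\<in>W \<inter> C. \<forall>y\<in>W \<inter> C. x\<^sup>-\<^sup>1 \<cdot> y \<in> A)"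
    using UV_A by blast
qed (blast intro: that)

text \<open>For \<open>y\<close> near \<open>z\<close> all \<open>y \<cdot> t\<close> with \<open>t \<in> F\<close> lie in \<open>B\<close>, whereas \<open>y\<^sup>-\<^sup>1 \<in> C\<close> would put
  one of them, \<open>(y\<^sup>-\<^sup>1)\<^sup>-\<^sup>1 \<cdot> t\<close>, into \<open>A\<close>.\<close>
lemma isCont_sinv_zero: "isCont sinv z"
  unfolding continuous_at_open
proof (intro allI impI)
  fix V assume V: "open V \<and> z\<^sup>-\<^sup>1 \<in> V"
  define C where "C = - V"
  have C: "closed C" "z \<notin> C" using V by (auto simp: C_def)
  have "z \<notin> rproj ` C"
  proof
    assume "z \<in> rproj ` C"
    then obtain k where "k \<in> C" "rproj k = z" by blast
    then show False using mult_rproj[of k] C(2) by simp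
  qed
  then obtain A B where AB: "open A" "open B" "rproj ` C \<subseteq> A" "z \<in> B" "A \<inter> B = {}"
    by (rule t2_separate_finite_point[OF finite_rproj_image[OF C]])
  obtain F where F: "finite F" "\<And>k. k \<in> C \<Longrightarrow> \<exists>t\<in>F. k\<^sup>-\<^sup>1 \<cdot> t \<in> A"
    using finite_sinv_cover[OF C AB(1,3)] by blast
  define N where "N = B \<inter> (\<Inter>t\<in>F. (\<lambda>y. y \<cdot> t) -` B)"
  have "open ((\<lambda>y. y \<cdot> t) -` B)" for t
    by (rule open_vimage[OF AB(2) continuous_on_mult[OF continuous_on_id continuous_on_const]])
  then have "open N" unfolding N_def by (intro open_Int open_INT AB(2) F(1) ballI)
  moreover have "z \<in> N" using AB(4) by (simp add: N_def)
  moreover have "y\<^sup>-\<^sup>1 \<in> V" if "y \<in> N" for y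
  proof (rule ccontr)
    assume "y\<^sup>-\<^sup>1 \<notin> V"
    then obtain t where "t \<in> F" "y \<cdot> t \<in> A" using F(2)[of "y\<^sup>-\<^sup>1"] by (auto simp: C_def)
    moreover have "y \<cdot> t \<in> B" if "t \<in> F" using \<open>y \<in> N\<close> that by (simp add: N_def)
    ultimately show False using AB(5) by blast
  qed
  ultimately show "\<exists>S. open S \<and> z \<in> S \<and> (\<forall>y\<in>S. y\<^sup>-\<^sup>1 \<in> V)" by blast
qed

lemma continuous_on_sinv: "continuous_on UNIV sinv"
  by (metis continuous_at_imp_continuous_on isCont_sinv_nonzero isCont_sinv_zero)

end
end
end

theorem corollary3p11:
  fixes m :: "'a::t2_space \<Rightarrow> 'a \<Rightarrow> 'a"
  assumes "topological_semigroup m"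
    and "countably_compact (UNIV :: 'a set)"
    and "primitive_inverse_semigroup m"
  shows "continuous_on UNIV (sg_inv m) \<longleftrightarrow>
         (\<forall>G. maximal_subgroup m G \<longrightarrow> topological_subgroup m G)"
proof -
  obtain z where "primitive_inv_semigroup m z"
    using assms(3) unfolding primitive_inverse_semigroup_def primitive_inv_semigroup_def
      primitive_inv_semigroup_axioms_def inv_semigroup_def by blast
  with assms(1) interpret top_primitive_inv_semigroup m z
    by (simp add: top_primitive_inv_semigroup_def top_primitive_inv_semigroup_axioms_def)
  show ?thesis
  proof
    assume "continuous_on UNIV (sg_inv m)"
    then show "\<forall>G. maximal_subgroup m G \<longrightarrow> topological_subgroup m G"
      by (auto simp: maximal_subgroup_def topological_subgroup_iff_continuous_sinv
          intro: continuous_on_subset)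
  next
    assume "\<forall>G. maximal_subgroup m G \<longrightarrow> topological_subgroup m G"
    then have "continuous_on (H_class e) (sg_inv m)" if "m e e = e" for e
      using that maximal_subgroup_H_class topological_subgroup_iff_continuous_sinv
      by (simp add: maximal_subgroup_def)
    then show "continuous_on UNIV (sg_inv m)" using continuous_on_sinv assms(2) by blast
  qed
qed

end
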